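(* Let $(G,\mathcal{P})$, $(H,\mathcal{Q})$ be group pairs with finite generating sets $S$ of $G$ and $T$ of $H$, and let $f=(f_1,f_2)\colon(G,\mathcal{P})\to(H,\mathcal{Q})$ be an $(L,C,M)$-Lipschitz map of pairs. (i) For all $\alpha,\alpha'\in\mathbb{N}$ with $\alpha'\ge L\alpha+C+M$, there is a simplicial map $f_*\colon\hat R_\alpha(G,\mathcal{P},S)\to\hat R_{\alpha'}(H,\mathcal{Q},T)$ given on vertices by $f_1\sqcup f_2$. (ii) Let $r\colon(H,\mathcal{Q})\to(G,\mathcal{P})$ be an $(L,C,M)$-Lipschitz map of pairs such that $(f,r)$ is an $(L,C,M)$-quasi-retraction of pairs. For all $\alpha,\alpha',\beta,\beta'\in\mathbb{N}$ with $\alpha'\ge L\alpha+C+M$, $\beta'\ge\alpha'$, $\beta\ge L\beta'+2C+M$, the composite $\hat R_\alpha(G,\mathcal{P},S)\xrightarrow{f_*}\hat R_{\alpha'}(H,\mathcal{Q},T)\hookrightarrow\hat R_{\beta'}(H,\mathcal{Q},T)\xrightarrow{r_*}\hat R_\beta(G,\mathcal{P},S)$ is simplicially homotopic to the inclusion $\hat R_\alpha(G,\mathcal{P},S)\hookrightarrow\hat R_\beta(G,\mathcal{P},S)$. In particular, for every $i\in\mathbb{N}$, if $(H_i(\hat R_{\alpha'}(H,\mathcal{Q},T);\mathbb{Z}))_{\alpha'\in\mathbb{N}}$ is essentially trivial, then $(H_i(\hat R_\alpha(G,\mathcal{P},S);\mathbb{Z}))_{\alpha\in\mathbb{N}}$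 is essentially trivial.
   Context: A group pair $(G,\mathcal{P})$: $G$ finitely generated, $\mathcal{P}$ a non-empty finite collection of subgroups (repetitions allowed); $G/\mathcal{P}=\coprod_{P\in\mathcal{P}}G/P$, elements viewed as cosets (subsets of $G$). $d_S$ is the word metric. $f$ is $(L,C)$-Lipschitz if $d(f(x),f(x'))\le L\,d(x,x')+C$. For $L\ge1,C\ge0,M\ge0$, an $(L,C,M)$-Lipschitz map of pairs $f=(f_1,f_2)$ is an $(L,C)$-Lipschitz $f_1\colon G\to H$ and a function $f_2\colon G/\mathcal{P}\to H/\mathcal{Q}$ with Hausdorff distance between $f_1(A)$ and $f_2(A)$ less than $M$ for all $A$. $(f,r)$ is an $(L,C,M)$-quasi-retraction of pairs if moreover $d_G(r_1f_1(g),g)\le C$ for all $g\in G$ and $r_2\circ f_2=\mathrm{id}_{G/\mathcal{P}}$ (with $r_*$ the simplicial map of part (i) for $r$). Elements of $G/\mathcal{P}$ are cone vertices. A finite $U\subseteq G\sqcup G/\mathcal{P}$ is a unicone subset of diameter $\le\alpha$ if $U\cap G$ has $d_S$-diameter $\le\alpha$ and $U$ contains at most one cone vertex $A$, in which case every $g\in U\cap G$ has $a\in A$ with $d_S(g,a)\le\alpha$. $\hat R_\alpha(G,\mathcal{P},S)$ is the simplicial complex whose simplices are these subsets; for $\beta\ge\alpha$ it is a subcomplex of $\hat R_\beta$. A directed system of groups is essentially trivial if each $H_\alpha$ maps trivially to some $H_\beta$, $\beta\ge\alpha$. *)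

theory Defs
  imports "HOL-Algebra.Generated_Groups" "HOL-Algebra.Coset" "HOL-Library.Extended_Real"
begin

text \<open>A finite collection of subgroups with repetitions is a non-empty list Ps.
  A finite generating set S of G.\<close>

definition fin_gen_set :: "('g, 'b) monoid_scheme \<Rightarrow> 'g set \<Rightarrow> bool" where
  "fin_gen_set G S \<longleftrightarrow> finite S \<and> S \<subseteq> carrier G \<and> generate G S = carrier G"

definition group_pair :: "('g, 'b) monoid_scheme \<Rightarrow> 'g set list \<Rightarrow> bool" where
  "group_pair G Ps \<longleftrightarrow> group G \<and> Ps \<noteq> [] \<and> (\<forall>P\<in>set Ps. subgroup P G)"

definition word_length :: "('g, 'b) monoid_scheme \<Rightarrow> 'g set \<Rightarrow> 'g \<Rightarrow> nat" where
  "word_length G S x = (LEAST n. \<exists>ws. length ws = n \<and> set ws \<subseteq> S \<union> (\<lambda>s. inv\<^bsub>G\<^esub> s) ` S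
      \<and> foldr (\<lambda>a b. a \<otimes>\<^bsub>G\<^esub> b) ws \<one>\<^bsub>G\<^esub> = x)"

definition wdist :: "('g, 'b) monoid_scheme \<Rightarrow> 'g set \<Rightarrow> 'g \<Rightarrow> 'g \<Rightarrow> nat" where
  "wdist G S g h = word_length G S (inv\<^bsub>G\<^esub> g \<otimes>\<^bsub>G\<^esub> h)"

text \<open>G/P = disjoint union of the left coset spaces G/P for P in the collection;
  an element is a pair (index, coset).\<close>
definition cones :: "('g, 'b) monoid_scheme \<Rightarrow> 'g set list \<Rightarrow> (nat \<times> 'g set) set" where
  "cones G Ps = {(k, g <#\<^bsub>G\<^esub> (Ps ! k)) | k g. k < length Ps \<and> g \<in> carrier G}"

definition hausdorff_dist :: "('g, 'b) monoid_scheme \<Rightarrow> 'g set \<Rightarrow> 'g set \<Rightarrow> 'g set \<Rightarrow> ereal" where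
  "hausdorff_dist G S X Y =
     max (SUP x\<in>X. INF y\<in>Y. ereal (real (wdist G S x y)))
         (SUP y\<in>Y. INF x\<in>X. ereal (real (wdist G S x y)))"

definition lipschitz_map :: "('g, 'b) monoid_scheme \<Rightarrow> 'g set \<Rightarrow> ('h, 'c) monoid_scheme \<Rightarrow> 'h set
    \<Rightarrow> real \<Rightarrow> real \<Rightarrow> ('g \<Rightarrow> 'h) \<Rightarrow> bool" where
  "lipschitz_map G S H T L C f \<longleftrightarrow> f \<in> carrier G \<rightarrow> carrier H \<and>
     (\<forall>x\<in>carrier G. \<forall>x'\<in>carrier G.
        real (wdist H T (f x) (f x')) \<le> L * real (wdist G S x x') + C)"

definition lipschitz_map_of_pairs ::
  "('g, 'b) monoid_scheme \<Rightarrow> 'g set list \<Rightarrow> 'g set \<Rightarrow> ('h, 'c) monoid_scheme \<Rightarrow> 'h set list \<Rightarrow> 'h set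
    \<Rightarrow> real \<Rightarrow> real \<Rightarrow> real \<Rightarrow> ('g \<Rightarrow> 'h) \<Rightarrow> (nat \<times> 'g set \<Rightarrow> nat \<times> 'h set) \<Rightarrow> bool" where
  "lipschitz_map_of_pairs G Ps S H Qs T L C M f1 f2 \<longleftrightarrow>
     L \<ge> 1 \<and> C \<ge> 0 \<and> M \<ge> 0 \<and>
     lipschitz_map G S H T L C f1 \<and>
     f2 \<in> cones G Ps \<rightarrow> cones H Qs \<and>
     (\<forall>A\<in>cones G Ps. hausdorff_dist H T (f1 ` snd A) (snd (f2 A)) < ereal M)"

definition quasi_retraction_of_pairs ::
  "('g, 'b) monoid_scheme \<Rightarrow> 'g set list \<Rightarrow> 'g set \<Rightarrow> ('h, 'c) monoid_scheme \<Rightarrow> 'h set list \<Rightarrow> 'h set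
    \<Rightarrow> real \<Rightarrow> real \<Rightarrow> real \<Rightarrow> ('g \<Rightarrow> 'h) \<Rightarrow> (nat \<times> 'g set \<Rightarrow> nat \<times> 'h set)
    \<Rightarrow> ('h \<Rightarrow> 'g) \<Rightarrow> (nat \<times> 'h set \<Rightarrow> nat \<times> 'g set) \<Rightarrow> bool" where
  "quasi_retraction_of_pairs G Ps S H Qs T L C M f1 f2 r1 r2 \<longleftrightarrow>
     lipschitz_map_of_pairs G Ps S H Qs T L C M f1 f2 \<and>
     lipschitz_map_of_pairs H Qs T G Ps S L C M r1 r2 \<and>
     (\<forall>g\<in>carrier G. real (wdist G S (r1 (f1 g)) g) \<le> C) \<and>
     (\<forall>A\<in>cones G Ps. r2 (f2 A) = A)"

text \<open>Vertices: Inl g for g in G, Inr A for cone vertices A in G/P.\<close>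
definition vertices :: "('g, 'b) monoid_scheme \<Rightarrow> 'g set list \<Rightarrow> ('g + (nat \<times> 'g set)) set" where
  "vertices G Ps = Inl ` carrier G \<union> Inr ` cones G Ps"

definition unicone :: "('g, 'b) monoid_scheme \<Rightarrow> 'g set list \<Rightarrow> 'g set \<Rightarrow> nat
    \<Rightarrow> ('g + (nat \<times> 'g set)) set \<Rightarrow> bool" where
  "unicone G Ps S \<alpha> U \<longleftrightarrow> finite U \<and> U \<noteq> {} \<and> U \<subseteq> vertices G Ps \<and>
     (\<forall>g h. Inl g \<in> U \<longrightarrow> Inl h \<in> U \<longrightarrow> wdist G S g h \<le> \<alpha>) \<and>
     (\<forall>A B. Inr A \<in> U \<longrightarrow> Inr B \<in> U \<longrightarrow> A = B) \<and>
     (\<forall>A g. Inr A \<in> U \<longrightarrow> Inl g \<in> U \<longrightarrow> (\<exists>a\<in>snd A. wdist G S g a \<le> \<alpha>))"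

definition Rhat :: "('g, 'b) monoid_scheme \<Rightarrow> 'g set list \<Rightarrow> 'g set \<Rightarrow> nat
    \<Rightarrow> ('g + (nat \<times> 'g set)) set set" where
  "Rhat G Ps S \<alpha> = {U. unicone G Ps S \<alpha> U}"

definition vmap :: "('g \<Rightarrow> 'h) \<Rightarrow> ('a \<Rightarrow> 'b) \<Rightarrow> ('g + 'a) \<Rightarrow> ('h + 'b)" where
  "vmap f1 f2 = case_sum (\<lambda>g. Inl (f1 g)) (\<lambda>A. Inr (f2 A))"

definition simplicial_map :: "'v set set \<Rightarrow> 'w set set \<Rightarrow> ('v \<Rightarrow> 'w) \<Rightarrow> bool" where
  "simplicial_map K K' F \<longleftrightarrow> (\<forall>\<sigma>\<in>K. F ` \<sigma> \<in> K')"

definition contiguous :: "'v set set \<Rightarrow> 'w set set \<Rightarrow> ('v \<Rightarrow> 'w) \<Rightarrow> ('v \<Rightarrow> 'w) \<Rightarrow> bool" where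
  "contiguous K K' F F' \<longleftrightarrow> (\<forall>\<sigma>\<in>K. F ` \<sigma> \<union> F' ` \<sigma> \<in> K')"

definition simp_homotopic :: "'v set set \<Rightarrow> 'w set set \<Rightarrow> ('v \<Rightarrow> 'w) \<Rightarrow> ('v \<Rightarrow> 'w) \<Rightarrow> bool" where
  "simp_homotopic K K' F F' \<longleftrightarrow> simplicial_map K K' F \<and> simplicial_map K K' F' \<and>
     (\<lambda>a b. simplicial_map K K' a \<and> simplicial_map K K' b \<and> contiguous K K' a b)\<^sup>*\<^sup>* F F'"

text \<open>An i-chain of K: finitely supported integer function on ordered (i+1)-tuples
  of vertices spanning a simplex of K.\<close>
definition is_chain :: "'v set set \<Rightarrow> nat \<Rightarrow> ('v list \<Rightarrow> int) \<Rightarrow> bool" where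
  "is_chain K i c \<longleftrightarrow> finite {\<sigma>. c \<sigma> \<noteq> 0} \<and>
     (\<forall>\<sigma>. c \<sigma> \<noteq> 0 \<longrightarrow> length \<sigma> = Suc i \<and> set \<sigma> \<in> K)"

definition face :: "nat \<Rightarrow> 'v list \<Rightarrow> 'v list" where
  "face j \<sigma> = take j \<sigma> @ drop (Suc j) \<sigma>"

definition bdry :: "('v list \<Rightarrow> int) \<Rightarrow> 'v list \<Rightarrow> int" where
  "bdry c \<tau> = (\<Sum>\<sigma>\<in>{\<sigma>. c \<sigma> \<noteq> 0}. \<Sum>j<length \<sigma>.
       if face j \<sigma> = \<tau> then (-1) ^ j * c \<sigma> else 0)"

definition is_cycle :: "'v set set \<Rightarrow> nat \<Rightarrow> ('v list \<Rightarrow> int) \<Rightarrow> bool" where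
  "is_cycle K i c \<longleftrightarrow> is_chain K i c \<and> (i = 0 \<or> bdry c = (\<lambda>_. 0))"

definition is_boundary :: "'v set set \<Rightarrow> nat \<Rightarrow> ('v list \<Rightarrow> int) \<Rightarrow> bool" where
  "is_boundary K i c \<longleftrightarrow> (\<exists>d. is_chain K (Suc i) d \<and> bdry d = c)"

text \<open>For a filtration K_0 \<subseteq> K_1 \<subseteq> ... the directed system (H_i(K_\<alpha>;Z))_\<alpha>, with
  maps induced by inclusion, is essentially trivial iff for each \<alpha> there is \<beta> \<ge> \<alpha>
  such that H_i(K_\<alpha>) \<rightarrow> H_i(K_\<beta>) is zero, i.e. every i-cycle of K_\<alpha> is an i-boundary in K_\<beta>.\<close>
definition ess_trivial_homology :: "(nat \<Rightarrow> 'v set set) \<Rightarrow> nat \<Rightarrow> bool" where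
  "ess_trivial_homology K i \<longleftrightarrow>
     (\<forall>\<alpha>. \<exists>\<beta>\<ge>\<alpha>. \<forall>c. is_cycle (K \<alpha>) i c \<longrightarrow> is_boundary (K \<beta>) i c)"

end

theory Submission
  imports Defs "HOL-Library.Poly_Mapping"
begin

text \<open>
  For (i): distances between group elements grow by at most the Lipschitz bound, and a point
  within \<alpha> of a coset A is mapped within L\<alpha> + C of f1(A), hence within L\<alpha> + C + M of f2(A);
  so f1 and f2 send a unicone set of diameter \<alpha> to a unicone set of diameter L\<alpha> + C + M.

  For (ii): r1 \<circ> f1 moves every group element by at most C and r2 \<circ> f2 fixes every cone vertex,
  so for each simplex \<sigma> of R_\<alpha> the set \<sigma> \<union> (r \<circ> f)(\<sigma>) is unicone of diameter
  \<alpha> + 2C \<le> \<beta>; that is, r_* \<circ> f_* is contiguous to the inclusion R_\<alpha> \<subseteq> R_\<beta>. On ordered chains a map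
  contiguous to the identity is chain homotopic to it (prism operator), so every i-cycle z of
  R_\<alpha> is homologous in R_\<beta> to r_* f_* z, which bounds in R_\<beta> as soon as f_* z bounds in R_\<beta>'.
\<close>

section \<open>Word metrics\<close>

context group
begin

definition word_prod :: "'a list \<Rightarrow> 'a" where
  "word_prod ws = foldr (\<otimes>) ws \<one>"

definition spells :: "'a set \<Rightarrow> 'a list \<Rightarrow> 'a \<Rightarrow> bool" where
  "spells S ws x \<longleftrightarrow> set ws \<subseteq> S \<union> m_inv G ` S \<and> word_prod ws = x"

lemma word_prod_Nil [simp]: "word_prod [] = \<one>"
  and word_prod_Cons [simp]: "word_prod (a # ws) = a \<otimes> word_prod ws"
  by (simp_all add: word_prod_def)

lemma word_prod_closed: "set ws \<subseteq> carrier G \<Longrightarrow> word_prod ws \<in> carrier G"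
  by (induction ws) auto

lemma word_prod_append:
  "set ws \<subseteq> carrier G \<Longrightarrow> set vs \<subseteq> carrier G \<Longrightarrow> word_prod (ws @ vs) = word_prod ws \<otimes> word_prod vs"
  by (induction ws) (auto simp: m_assoc word_prod_closed)

lemma word_prod_rev_inv:
  "set ws \<subseteq> carrier G \<Longrightarrow> word_prod (rev (map (m_inv G) ws)) = inv (word_prod ws)"
proof (induction ws)
  case (Cons a ws)
  have "set (rev (map (m_inv G) ws)) \<subseteq> carrier G" using Cons.prems by auto
  with Cons.prems have "word_prod (rev (map (m_inv G) (a # ws)))
      = word_prod (rev (map (m_inv G) ws)) \<otimes> (inv a \<otimes> \<one>)"
    by (simp add: word_prod_append)
  also have "\<dots> = inv (a \<otimes> word_prod ws)"
    using Cons by (simp add: inv_mult_group word_prod_closed)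
  finally show ?case by simp
qed simp

lemma word_length_spells: "word_length G S x = (LEAST n. \<exists>ws. length ws = n \<and> spells S ws x)"
  unfolding word_length_def spells_def word_prod_def by simp

lemma word_length_le: "spells S ws x \<Longrightarrow> word_length G S x \<le> length ws"
  unfolding word_length_spells by (rule Least_le) blast

lemma spells_append:
  assumes "S \<subseteq> carrier G" "spells S ws x" "spells S vs y"
  shows "spells S (ws @ vs) (x \<otimes> y)"
proof -
  have "S \<union> m_inv G ` S \<subseteq> carrier G" using assms(1) by auto
  then have "set ws \<subseteq> carrier G" "set vs \<subseteq> carrier G"
    using assms(2,3) unfolding spells_def by blast+
  then show ?thesis using assms(2,3) unfolding spells_def by (auto simp: word_prod_append)
qed

lemma spells_rev_inv:
  assumes "S \<subseteq> carrier G" "spells S ws x"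
  shows "spells S (rev (map (m_inv G) ws)) (inv x)"
proof -
  have ws: "set ws \<subseteq> S \<union> m_inv G ` S" using assms(2) unfolding spells_def by blast
  have "m_inv G ` (S \<union> m_inv G ` S) \<subseteq> S \<union> m_inv G ` S"
    using assms(1) by (auto simp: subset_iff)
  then have "set (rev (map (m_inv G) ws)) \<subseteq> S \<union> m_inv G ` S"
    using image_mono[OF ws, of "m_inv G"] by simp
  moreover have "set ws \<subseteq> carrier G" using ws assms(1) by auto
  ultimately show ?thesis using assms(2) unfolding spells_def by (simp add: word_prod_rev_inv)
qed

lemma spells_generate:
  assumes "S \<subseteq> carrier G" "x \<in> generate G S"
  shows "\<exists>ws. spells S ws x"
  using assms(2)
proof (induction rule: generate.induct)
  case one
  show ?case by (rule exI[of _ "[]"]) (simp add: spells_def)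
next
  case (incl h)
  then show ?case by (intro exI[of _ "[h]"]) (use assms(1) in \<open>auto simp: spells_def\<close>)
next
  case (inv h)
  then show ?case by (intro exI[of _ "[inv h]"]) (use assms(1) in \<open>auto simp: spells_def\<close>)
next
  case (eng h1 h2)
  then show ?case using spells_append[OF assms(1)] by blast
qed

lemma spells_shortest:
  assumes "S \<subseteq> carrier G" "x \<in> generate G S"
  obtains ws where "spells S ws x" "length ws = word_length G S x"
proof -
  have "\<exists>n ws. length ws = n \<and> spells S ws x" using spells_generate[OF assms] by blast
  from LeastI_ex[OF this] show ?thesis using that unfolding word_length_spells by blast
qed

lemma word_length_mult:
  assumes "fin_gen_set G S" "x \<in> carrier G" "y \<in> carrier G"
  shows "word_length G S (x \<otimes> y) \<le> word_length G S x + word_length G S y"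
proof -
  have S: "S \<subseteq> carrier G" "generate G S = carrier G" using assms(1) by (auto simp: fin_gen_set_def)
  obtain ws vs where "spells S ws x" "length ws = word_length G S x"
    and "spells S vs y" "length vs = word_length G S y"
    using spells_shortest S assms(2,3) by metis
  then show ?thesis using word_length_le[OF spells_append[OF S(1)]] by fastforce
qed

lemma word_length_inv:
  assumes "fin_gen_set G S" "x \<in> carrier G"
  shows "word_length G S (inv x) \<le> word_length G S x"
proof -
  have S: "S \<subseteq> carrier G" "generate G S = carrier G" using assms(1) by (auto simp: fin_gen_set_def)
  obtain ws where "spells S ws x" "length ws = word_length G S x"
    using spells_shortest S assms(2) by metis
  then show ?thesis using word_length_le[OF spells_rev_inv[OF S(1)]] by fastforce
qed

lemma wdist_triangle:
  assumes "fin_gen_set G S" "x \<in> carrier G" "y \<in> carrier G" "z \<in> carrier G"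
  shows "wdist G S x z \<le> wdist G S x y + wdist G S y z"
proof -
  have "inv x \<otimes> z = (inv x \<otimes> y) \<otimes> (inv y \<otimes> z)"
    using assms by (simp add: m_assoc[symmetric]) (simp add: m_assoc)
  then show ?thesis unfolding wdist_def using word_length_mult[OF assms(1)] assms by simp
qed

lemma wdist_triangle_le:
  assumes "fin_gen_set G S" "x \<in> carrier G" "y \<in> carrier G" "z \<in> carrier G"
    and "real (wdist G S x y) \<le> a" "real (wdist G S y z) \<le> b"
  shows "real (wdist G S x z) \<le> a + b"
  using wdist_triangle[OF assms(1-4)] assms(5,6) by linarith

lemma wdist_self: "wdist G S x x = 0" if "x \<in> carrier G"
  using word_length_le[of S "[]" \<one>] that by (simp add: wdist_def spells_def)

lemma wdist_commute:
  assumes "fin_gen_set G S" "x \<in> carrier G" "y \<in> carrier G"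
  shows "wdist G S x y = wdist G S y x"
proof -
  have le: "wdist G S a b \<le> wdist G S b a" if "a \<in> carrier G" "b \<in> carrier G" for a b
  proof -
    have "inv (inv b \<otimes> a) = inv a \<otimes> b" using that by (simp add: inv_mult_group)
    then show ?thesis
      unfolding wdist_def using word_length_inv[OF assms(1), of "inv b \<otimes> a"] that by simp
  qed
  show ?thesis using le[of x y] le[of y x] assms by simp
qed

end

lemma cones_subset_carrier:
  assumes "group_pair G Ps" "A \<in> cones G Ps"
  shows "snd A \<subseteq> carrier G"
proof -
  obtain k g where A: "A = (k, g <#\<^bsub>G\<^esub> (Ps ! k))" "k < length Ps" "g \<in> carrier G"
    using assms(2) unfolding cones_def by blast
  then have "group G" "subgroup (Ps ! k) G" using assms(1) unfolding group_pair_def by auto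
  then show ?thesis using A group.l_coset_subset_G[OF _ subgroup.subset] by simp
qed

lemma hausdorff_dist_lessD:
  assumes "hausdorff_dist G S X Y < ereal M" "x \<in> X"
  obtains y where "y \<in> Y" "real (wdist G S x y) < M"
proof -
  have "(INF y\<in>Y. ereal (real (wdist G S x y))) \<le> (SUP x\<in>X. INF y\<in>Y. ereal (real (wdist G S x y)))"
    using assms(2) by (rule SUP_upper)
  also have "\<dots> < ereal M" using assms(1) unfolding hausdorff_dist_def by simp
  finally show ?thesis using that by (auto simp: INF_less_iff)
qed

lemma lipschitz_map_of_pairs_consts:
  "lipschitz_map_of_pairs G Ps S H Qs T L C M f1 f2 \<Longrightarrow> L \<ge> 1 \<and> C \<ge> 0 \<and> M \<ge> 0"
  unfolding lipschitz_map_of_pairs_def by auto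

lemma lipschitz_map_of_pairs_carrier:
  "lipschitz_map_of_pairs G Ps S H Qs T L C M f1 f2 \<Longrightarrow> x \<in> carrier G \<Longrightarrow> f1 x \<in> carrier H"
  unfolding lipschitz_map_of_pairs_def lipschitz_map_def by auto

lemma lipschitz_map_of_pairs_cones:
  "lipschitz_map_of_pairs G Ps S H Qs T L C M f1 f2 \<Longrightarrow> A \<in> cones G Ps \<Longrightarrow> f2 A \<in> cones H Qs"
  unfolding lipschitz_map_of_pairs_def by auto

lemma lipschitz_map_of_pairs_wdist_le:
  assumes "lipschitz_map_of_pairs G Ps S H Qs T L C M f1 f2"
    and "x \<in> carrier G" "y \<in> carrier G" "real (wdist G S x y) \<le> D"
  shows "real (wdist H T (f1 x) (f1 y)) \<le> L * D + C"
proof -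
  have "L \<ge> 1" "real (wdist H T (f1 x) (f1 y)) \<le> L * real (wdist G S x y) + C"
    using assms(1-3) unfolding lipschitz_map_of_pairs_def lipschitz_map_def by auto
  moreover have "L * real (wdist G S x y) \<le> L * D"
    using assms(4) \<open>L \<ge> 1\<close> by (intro mult_left_mono) auto
  ultimately show ?thesis by linarith
qed

lemma lipschitz_map_of_pairs_near_cone:
  assumes GP: "group_pair G Ps" and HQ: "group_pair H Qs" and T: "fin_gen_set H T"
    and f: "lipschitz_map_of_pairs G Ps S H Qs T L C M f1 f2"
    and A: "A \<in> cones G Ps" and g: "g \<in> carrier G" and a: "a \<in> snd A"
    and ga: "real (wdist G S g a) \<le> D"
  obtains b where "b \<in> snd (f2 A)" "real (wdist H T (f1 g) b) \<le> L * D + C + M"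
proof -
  have a_carrier: "a \<in> carrier G" using cones_subset_carrier[OF GP A] a by auto
  have "hausdorff_dist H T (f1 ` snd A) (snd (f2 A)) < ereal M"
    using f A unfolding lipschitz_map_of_pairs_def by blast
  then obtain b where b: "b \<in> snd (f2 A)" "real (wdist H T (f1 a) b) < M"
    by (rule hausdorff_dist_lessD[OF _ imageI[OF a]])
  have "b \<in> carrier H"
    using cones_subset_carrier[OF HQ lipschitz_map_of_pairs_cones[OF f A]] b by auto
  moreover have "real (wdist H T (f1 g) (f1 a)) \<le> L * D + C"
    by (rule lipschitz_map_of_pairs_wdist_le[OF f g a_carrier ga])
  moreover have "group H" using HQ by (simp add: group_pair_def)
  ultimately have "real (wdist H T (f1 g) b) \<le> L * D + C + M"
    using group.wdist_triangle_le[of H T "f1 g" "f1 a" b] T g a_carrier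
      lipschitz_map_of_pairs_carrier[OF f] less_imp_le[OF b(2)] by blast
  then show ?thesis using b(1) that by blast
qed

lemma vmap_Inl [simp]: "vmap f1 f2 (Inl g) = Inl (f1 g)"
  and vmap_Inr [simp]: "vmap f1 f2 (Inr A) = Inr (f2 A)"
  by (simp_all add: vmap_def)

lemma Inl_in_vmap_image: "Inl y \<in> vmap f1 f2 ` U \<longleftrightarrow> (\<exists>g. Inl g \<in> U \<and> y = f1 g)"
  by (force simp: vmap_def split: sum.splits)

lemma Inr_in_vmap_image: "Inr B \<in> vmap f1 f2 ` U \<longleftrightarrow> (\<exists>A. Inr A \<in> U \<and> B = f2 A)"
  by (force simp: vmap_def split: sum.splits)

lemma unicone_Inl_carrier: "unicone G Ps S \<alpha> U \<Longrightarrow> Inl g \<in> U \<Longrightarrow> g \<in> carrier G"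
  unfolding unicone_def vertices_def by auto

lemma unicone_Inr_cones: "unicone G Ps S \<alpha> U \<Longrightarrow> Inr A \<in> U \<Longrightarrow> A \<in> cones G Ps"
  unfolding unicone_def vertices_def by auto

lemma unicone_vmap_image:
  assumes GP: "group_pair G Ps" and HQ: "group_pair H Qs" and T: "fin_gen_set H T"
    and f: "lipschitz_map_of_pairs G Ps S H Qs T L C M f1 f2"
    and \<alpha>': "real \<alpha>' \<ge> L * real \<alpha> + C + M" and U: "unicone G Ps S \<alpha> U"
  shows "unicone H Qs T \<alpha>' (vmap f1 f2 ` U)"
proof -
  have M: "M \<ge> 0" using lipschitz_map_of_pairs_consts[OF f] by simp
  have "vmap f1 f2 ` U \<subseteq> vertices H Qs"
    using U unicone_Inl_carrier[OF U] unicone_Inr_cones[OF U]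
      lipschitz_map_of_pairs_carrier[OF f] lipschitz_map_of_pairs_cones[OF f]
    by (auto simp: vmap_def vertices_def split: sum.splits)
  moreover have "wdist H T y y' \<le> \<alpha>'"
    if yy': "Inl y \<in> vmap f1 f2 ` U" "Inl y' \<in> vmap f1 f2 ` U" for y y'
  proof -
    obtain g g' where g: "Inl g \<in> U" "Inl g' \<in> U" "y = f1 g" "y' = f1 g'"
      using yy' unfolding Inl_in_vmap_image by blast
    have "real (wdist G S g g') \<le> real \<alpha>" using U g unfolding unicone_def by auto
    from lipschitz_map_of_pairs_wdist_le[OF f unicone_Inl_carrier[OF U g(1)]
        unicone_Inl_carrier[OF U g(2)] this]
    show ?thesis using g \<alpha>' M by simp
  qed
  moreover have "B = B'" if "Inr B \<in> vmap f1 f2 ` U" "Inr B' \<in> vmap f1 f2 ` U" for B B'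
    using that U unfolding unicone_def Inr_in_vmap_image by blast
  moreover have "\<exists>b\<in>snd B. wdist H T y b \<le> \<alpha>'"
    if By: "Inr B \<in> vmap f1 f2 ` U" "Inl y \<in> vmap f1 f2 ` U" for B y
  proof -
    obtain g A where gA: "Inl g \<in> U" "Inr A \<in> U" "y = f1 g" "B = f2 A"
      using By unfolding Inl_in_vmap_image Inr_in_vmap_image by blast
    obtain a where "a \<in> snd A" "wdist G S g a \<le> \<alpha>" using U gA unfolding unicone_def by blast
    then obtain b where "b \<in> snd (f2 A)" "real (wdist H T (f1 g) b) \<le> L * real \<alpha> + C + M"
      using lipschitz_map_of_pairs_near_cone[OF GP HQ T f unicone_Inr_cones[OF U gA(2)]
          unicone_Inl_carrier[OF U gA(1)]] by (metis of_nat_le_iff)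
    then show ?thesis using gA \<alpha>' by (intro bexI[of _ b]) auto
  qed
  ultimately show ?thesis using U unfolding unicone_def by auto
qed

lemma simplicial_map_vmap:
  assumes "group_pair G Ps" "group_pair H Qs" "fin_gen_set H T"
    and "lipschitz_map_of_pairs G Ps S H Qs T L C M f1 f2"
    and "real \<alpha>' \<ge> L * real \<alpha> + C + M"
  shows "simplicial_map (Rhat G Ps S \<alpha>) (Rhat H Qs T \<alpha>') (vmap f1 f2)"
  unfolding simplicial_map_def Rhat_def using unicone_vmap_image[OF assms] by blast

lemma unicone_enlarge:
  assumes GP: "group_pair G Ps" and S: "fin_gen_set G S"
    and U: "unicone G Ps S \<alpha> U" and W: "finite W" "U \<subseteq> W" "W \<subseteq> vertices G Ps"
    and cone_vertices: "\<And>A. Inr A \<in> W \<Longrightarrow> Inr A \<in> U"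
    and near: "\<And>x. Inl x \<in> W \<Longrightarrow> \<exists>g. Inl g \<in> U \<and> real (wdist G S x g) \<le> C"
    and \<beta>: "real \<alpha> + 2 * C \<le> real \<beta>"
  shows "unicone G Ps S \<beta> W"
proof -
  have grp: "group G" using GP by (simp add: group_pair_def)
  have W_carrier: "x \<in> carrier G" if "Inl x \<in> W" for x
    using that W(3) unfolding vertices_def by auto
  have U_carrier: "g \<in> carrier G" if "Inl g \<in> U" for g
    using unicone_Inl_carrier[OF U that] .
  have dist: "wdist G S x y \<le> \<beta>" if xy: "Inl x \<in> W" "Inl y \<in> W" for x y
  proof -
    obtain g h where g: "Inl g \<in> U" "real (wdist G S x g) \<le> C"
      and h: "Inl h \<in> U" "real (wdist G S y h) \<le> C"
      using near xy by blast
    have "real (wdist G S g h) \<le> real \<alpha>" using U g h unfolding unicone_def by auto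
    moreover have "real (wdist G S h y) \<le> C"
      using h group.wdist_commute[OF grp S] W_carrier U_carrier xy by metis
    ultimately have "real (wdist G S g y) \<le> real \<alpha> + C"
      using group.wdist_triangle_le[OF grp S] W_carrier U_carrier xy g h by blast
    then have "real (wdist G S x y) \<le> C + (real \<alpha> + C)"
      using group.wdist_triangle_le[OF grp S] W_carrier U_carrier xy g by blast
    then show ?thesis using \<beta> by simp
  qed
  have cone: "\<exists>a\<in>snd A. wdist G S x a \<le> \<beta>" if Ax: "Inr A \<in> W" "Inl x \<in> W" for A x
  proof -
    obtain g where g: "Inl g \<in> U" "real (wdist G S x g) \<le> C" using near Ax(2) by blast
    have A: "Inr A \<in> U" using cone_vertices[OF Ax(1)] .
    obtain a where a: "a \<in> snd A" "wdist G S g a \<le> \<alpha>"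
      using U g(1) A unfolding unicone_def by blast
    have "a \<in> carrier G"
      using cones_subset_carrier[OF GP unicone_Inr_cones[OF U A]] a by auto
    moreover have "real (wdist G S g a) \<le> real \<alpha>" using a by simp
    ultimately have "real (wdist G S x a) \<le> C + real \<alpha>"
      using group.wdist_triangle_le[OF grp S] W_carrier U_carrier Ax g by blast
    then show ?thesis using a \<beta> g by (intro bexI[of _ a]) auto
  qed
  have single: "A = B" if "Inr A \<in> W" "Inr B \<in> W" for A B
    using U cone_vertices[OF that(1)] cone_vertices[OF that(2)] unfolding unicone_def by blast
  have "W \<noteq> {}" using U W(2) unfolding unicone_def by blast
  then show ?thesis unfolding unicone_def using W(1,3) dist single cone by blast
qed

lemma unicone_quasi_retraction_union:
  assumes GP: "group_pair G Ps" and S: "fin_gen_set G S"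
    and q: "quasi_retraction_of_pairs G Ps S H Qs T L C M f1 f2 r1 r2"
    and \<beta>: "real \<alpha> + 2 * C \<le> real \<beta>" and U: "unicone G Ps S \<alpha> U"
  shows "unicone G Ps S \<beta> ((vmap r1 r2 \<circ> vmap f1 f2) ` U \<union> U)"
proof (rule unicone_enlarge[OF GP S U _ _ _ _ _ \<beta>])
  have f: "lipschitz_map_of_pairs G Ps S H Qs T L C M f1 f2"
    and r: "lipschitz_map_of_pairs H Qs T G Ps S L C M r1 r2"
    and r1f1: "\<And>g. g \<in> carrier G \<Longrightarrow> real (wdist G S (r1 (f1 g)) g) \<le> C"
    and r2f2: "\<And>A. A \<in> cones G Ps \<Longrightarrow> r2 (f2 A) = A"
    using q unfolding quasi_retraction_of_pairs_def by auto
  have grp: "group G" using GP by (simp add: group_pair_def)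
  let ?W = "(vmap r1 r2 \<circ> vmap f1 f2) ` U \<union> U"
  have image: "v \<in> U \<or> (\<exists>g. Inl g \<in> U \<and> v = Inl (r1 (f1 g)) \<and> r1 (f1 g) \<in> carrier G)"
    if v: "v \<in> ?W" for v
  proof (cases "v \<in> U")
    case False
    then obtain u where u: "u \<in> U" "v = vmap r1 r2 (vmap f1 f2 u)" using v by auto
    show ?thesis
    proof (cases u)
      case (Inl g)
      then show ?thesis using u unicone_Inl_carrier[OF U]
          lipschitz_map_of_pairs_carrier[OF r lipschitz_map_of_pairs_carrier[OF f]] by auto
    next
      case (Inr A)
      then show ?thesis using u r2f2 unicone_Inr_cones[OF U] by auto
    qed
  qed simp
  show "finite ?W" using U unfolding unicone_def by simp
  show "U \<subseteq> ?W" by blast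
  have "U \<subseteq> vertices G Ps" using U by (simp add: unicone_def)
  then show "?W \<subseteq> vertices G Ps" using image by (fastforce simp: vertices_def)
  show "Inr A \<in> U" if "Inr A \<in> ?W" for A using image[OF that] by simp
  show "\<exists>g. Inl g \<in> U \<and> real (wdist G S x g) \<le> C" if "Inl x \<in> ?W" for x
  proof (cases "Inl x \<in> U")
    case True
    have "C \<ge> 0" using lipschitz_map_of_pairs_consts[OF f] by simp
    with True show ?thesis
      by (intro exI[of _ x]) (simp add: group.wdist_self[OF grp] unicone_Inl_carrier[OF U])
  next
    case False
    then show ?thesis using image[OF that] r1f1 unicone_Inl_carrier[OF U] by fastforce
  qed
qed

definition face_closed :: "'v set set \<Rightarrow> bool" where
  "face_closed K \<longleftrightarrow> (\<forall>\<sigma>\<in>K. \<forall>\<tau>. \<tau> \<subseteq> \<sigma> \<longrightarrow> \<tau> \<noteq> {} \<longrightarrow> \<tau> \<in> K)"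

lemma unicone_subset: "unicone G Ps S \<alpha> U \<Longrightarrow> V \<subseteq> U \<Longrightarrow> V \<noteq> {} \<Longrightarrow> unicone G Ps S \<alpha> V"
  unfolding unicone_def by (meson finite_subset subset_iff)

lemma face_closed_Rhat: "face_closed (Rhat G Ps S \<alpha>)"
  unfolding face_closed_def Rhat_def using unicone_subset by blast

lemma empty_notin_Rhat: "{} \<notin> Rhat G Ps S \<alpha>"
  unfolding Rhat_def unicone_def by simp

lemma simp_homotopic_idI:
  assumes K': "face_closed K'" and K: "{} \<notin> K" and contig: "\<And>\<sigma>. \<sigma> \<in> K \<Longrightarrow> F ` \<sigma> \<union> \<sigma> \<in> K'"
  shows "simp_homotopic K K' F id"
proof -
  have "simplicial_map K K' F \<and> simplicial_map K K' id"
    unfolding simplicial_map_def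
  proof (intro conjI ballI)
    fix \<sigma> assume "\<sigma> \<in> K"
    then have "F ` \<sigma> \<union> \<sigma> \<in> K'" "\<sigma> \<noteq> {}" using contig K by auto
    moreover have "F ` \<sigma> \<subseteq> F ` \<sigma> \<union> \<sigma>" "id ` \<sigma> \<subseteq> F ` \<sigma> \<union> \<sigma>" by auto
    ultimately show "F ` \<sigma> \<in> K'" "id ` \<sigma> \<in> K'"
      using K' unfolding face_closed_def by (metis image_is_empty)+
  qed
  moreover have "contiguous K K' F id"
    using contig unfolding contiguous_def by simp
  ultimately show ?thesis
    unfolding simp_homotopic_def by (auto intro: r_into_rtranclp)
qed

lemma quasi_retraction_scale_le:
  fixes L C M :: real
  assumes "L \<ge> 1" "C \<ge> 0" "M \<ge> 0"
    and "real \<alpha>' \<ge> L * real \<alpha> + C + M" "\<beta>' \<ge> \<alpha>'" "real \<beta> \<ge> L * real \<beta>' + 2 * C + M"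
  shows "real \<alpha> + 2 * C \<le> real \<beta>"
proof -
  have "real \<alpha> \<le> L * real \<alpha>" "real \<beta>' \<le> L * real \<beta>'"
    using assms(1) by (simp_all add: mult_le_cancel_right1)
  then show ?thesis using assms by linarith
qed

lemma simp_homotopic_quasi_retraction:
  assumes "group_pair G Ps" "fin_gen_set G S"
    and "quasi_retraction_of_pairs G Ps S H Qs T L C M f1 f2 r1 r2"
    and "real \<alpha> + 2 * C \<le> real \<beta>"
  shows "simp_homotopic (Rhat G Ps S \<alpha>) (Rhat G Ps S \<beta>) (vmap r1 r2 \<circ> vmap f1 f2) id"
proof (rule simp_homotopic_idI[OF face_closed_Rhat empty_notin_Rhat])
  fix \<sigma> assume "\<sigma> \<in> Rhat G Ps S \<alpha>"
  then show "(vmap r1 r2 \<circ> vmap f1 f2) ` \<sigma> \<union> \<sigma> \<in> Rhat G Ps S \<beta>"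
    using unicone_quasi_retraction_union[OF assms] unfolding Rhat_def by blast
qed

section \<open>Ordered simplicial chains\<close>

definition simplex_bd :: "'v list \<Rightarrow> 'v list \<Rightarrow>\<^sub>0 int" where
  "simplex_bd \<sigma> = (\<Sum>j<length \<sigma>. frag_cmul ((-1) ^ j) (frag_of (face j \<sigma>)))"

definition chain_bd :: "('v list \<Rightarrow>\<^sub>0 int) \<Rightarrow> 'v list \<Rightarrow>\<^sub>0 int" where
  "chain_bd = frag_extend simplex_bd"

definition chain_image :: "('v \<Rightarrow> 'w) \<Rightarrow> ('v list \<Rightarrow>\<^sub>0 int) \<Rightarrow> 'w list \<Rightarrow>\<^sub>0 int" where
  "chain_image F = frag_extend (frag_of \<circ> map F)"

definition chain_cone :: "'v \<Rightarrow> ('v list \<Rightarrow>\<^sub>0 int) \<Rightarrow> 'v list \<Rightarrow>\<^sub>0 int" where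
  "chain_cone v = frag_extend (\<lambda>\<tau>. frag_of (v # \<tau>))"

text \<open>The standard prism operator. Its simplices lie in F ` \<sigma> \<union> \<sigma>, which is why contiguity
  to the identity suffices for it to be a chain homotopy inside the target complex.\<close>
fun prism_simplex :: "('v \<Rightarrow> 'v) \<Rightarrow> 'v list \<Rightarrow> 'v list \<Rightarrow>\<^sub>0 int" where
  "prism_simplex F [] = 0"
| "prism_simplex F (v # s) = frag_of (F v # v # s) - chain_cone (F v) (prism_simplex F s)"

definition prism :: "('v \<Rightarrow> 'v) \<Rightarrow> ('v list \<Rightarrow>\<^sub>0 int) \<Rightarrow> 'v list \<Rightarrow>\<^sub>0 int" where
  "prism F = frag_extend (prism_simplex F)"

lemma chain_bd_simps [simp]:
  "chain_bd 0 = 0" "chain_bd (a - b) = chain_bd a - chain_bd b"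
  "chain_bd (a + b) = chain_bd a + chain_bd b" "chain_bd (frag_of \<sigma>) = simplex_bd \<sigma>"
  by (simp_all add: chain_bd_def frag_extend_diff frag_extend_add)

lemma chain_image_simps [simp]:
  "chain_image F 0 = 0" "chain_image F (a - b) = chain_image F a - chain_image F b"
  "chain_image F (frag_of \<sigma>) = frag_of (map F \<sigma>)"
  by (simp_all add: chain_image_def frag_extend_diff)

lemma chain_cone_simps [simp]:
  "chain_cone v 0 = 0" "chain_cone v (a - b) = chain_cone v a - chain_cone v b"
  "chain_cone v (a + b) = chain_cone v a + chain_cone v b"
  "chain_cone v (frag_of \<tau>) = frag_of (v # \<tau>)"
  by (simp_all add: chain_cone_def frag_extend_diff frag_extend_add)

lemma prism_simps [simp]:
  "prism F 0 = 0" "prism F (a - b) = prism F a - prism F b"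
  "prism F (frag_of \<sigma>) = prism_simplex F \<sigma>"
  by (simp_all add: prism_def frag_extend_diff)

lemma chain_image_comp: "chain_image r (chain_image f x) = chain_image (r \<circ> f) x"
  unfolding chain_image_def frag_extend_compose by (simp only: comp_assoc map_comp_map)

lemma face_Cons_0 [simp]: "face 0 (v # t) = t"
  and face_Cons_Suc [simp]: "face (Suc j) (v # t) = v # face j t"
  by (simp_all add: face_def)

lemma simplex_bd_Nil [simp]: "simplex_bd [] = 0"
  by (simp add: simplex_bd_def)

lemma simplex_bd_Cons: "simplex_bd (v # t) = frag_of t - chain_cone v (simplex_bd t)"
proof -
  have "simplex_bd (v # t)
      = frag_of t + (\<Sum>j<length t. frag_cmul ((-1) ^ Suc j) (frag_of (v # face j t)))"
    unfolding simplex_bd_def length_Cons sum.lessThan_Suc_shift by (simp del: power_Suc)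
  also have "\<dots> = frag_of t - (\<Sum>j<length t. frag_cmul ((-1) ^ j) (frag_of (v # face j t)))"
    by (simp add: sum_negf[symmetric])
  also have "(\<Sum>j<length t. frag_cmul ((-1) ^ j) (frag_of (v # face j t)))
      = chain_cone v (simplex_bd t)"
    unfolding simplex_bd_def chain_cone_def by (simp add: frag_extend_sum frag_extend_cmul comp_def)
  finally show ?thesis .
qed

lemma chain_bd_cone: "chain_bd (chain_cone v y) = y - chain_cone v (chain_bd y)"
  using subset_UNIV
proof (induction y rule: frag_induction)
  case (one x)
  then show ?case by (simp add: simplex_bd_Cons)
next
  case (diff a b)
  then show ?case by (simp add: algebra_simps)
qed simp

lemma prism_cone:
  "prism F (chain_cone v y) = chain_cone (F v) (chain_cone v y) - chain_cone (F v) (prism F y)"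
  using subset_UNIV
proof (induction y rule: frag_induction)
  case (diff a b)
  then show ?case by (simp add: algebra_simps)
qed simp_all

lemma chain_bd_prism_simplex:
  "chain_bd (prism_simplex F \<sigma>) + prism F (simplex_bd \<sigma>) = frag_of \<sigma> - frag_of (map F \<sigma>)"
proof (induction \<sigma>)
  case (Cons v s)
  have "chain_bd (prism_simplex F (v # s)) + prism F (simplex_bd (v # s))
      = frag_of (v # s) - frag_of (F v # s)
        + chain_cone (F v) (chain_bd (prism_simplex F s) + prism F (simplex_bd s))"
    by (simp add: simplex_bd_Cons chain_bd_cone prism_cone algebra_simps)
  also have "\<dots> = frag_of (v # s) - frag_of (map F (v # s))"
    using Cons by simp
  finally show ?case .
qed simp

lemma chain_bd_prism: "chain_bd (prism F x) + prism F (chain_bd x) = x - chain_image F x"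
  using subset_UNIV
proof (induction x rule: frag_induction)
  case (one x)
  then show ?case by (simp add: chain_bd_prism_simplex)
next
  case (diff a b)
  then show ?case by (simp add: algebra_simps)
qed simp

lemma face_map: "face j (map F s) = map F (face j s)"
  by (simp add: face_def take_map drop_map)

lemma chain_bd_image: "chain_bd (chain_image F x) = chain_image F (chain_bd x)"
proof -
  have "simplex_bd (map F \<sigma>) = chain_image F (simplex_bd \<sigma>)" for \<sigma>
    unfolding simplex_bd_def chain_image_def
    by (simp add: frag_extend_sum frag_extend_cmul comp_def face_map)
  with subset_UNIV show ?thesis
    by (induction x rule: frag_induction) simp_all
qed

lemma prism_chain_bd_vertices:
  assumes "\<And>\<sigma>. \<sigma> \<in> Poly_Mapping.keys x \<Longrightarrow> length \<sigma> = 1"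
  shows "prism F (chain_bd x) = 0"
proof -
  have "Poly_Mapping.keys x \<subseteq> {\<sigma>. length \<sigma> = 1}" using assms by blast
  then show ?thesis
  proof (induction x rule: frag_induction)
    case (one \<sigma>)
    then obtain v where "\<sigma> = [v]" by (auto simp: length_Suc_conv)
    then show ?case by (simp add: simplex_bd_Cons)
  qed auto
qed

lemma keys_chain_image: "Poly_Mapping.keys (chain_image F x) \<subseteq> map F ` Poly_Mapping.keys x"
  unfolding chain_image_def using keys_frag_extend by fastforce

lemma keys_prism_simplex:
  "w \<in> Poly_Mapping.keys (prism_simplex F \<sigma>) \<Longrightarrow>
     length w = Suc (length \<sigma>) \<and> set w \<subseteq> F ` set \<sigma> \<union> set \<sigma>"
proof (induction \<sigma> arbitrary: w)
  case (Cons v s)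
  have "Poly_Mapping.keys (chain_cone (F v) (prism_simplex F s))
      \<subseteq> Cons (F v) ` Poly_Mapping.keys (prism_simplex F s)"
    unfolding chain_cone_def using keys_frag_extend by fastforce
  then have "w = F v # v # s \<or> (\<exists>u \<in> Poly_Mapping.keys (prism_simplex F s). w = F v # u)"
    using Cons.prems keys_diff by fastforce
  then show ?case
  proof
    assume "\<exists>u \<in> Poly_Mapping.keys (prism_simplex F s). w = F v # u"
    then obtain u where "u \<in> Poly_Mapping.keys (prism_simplex F s)" "w = F v # u" by blast
    with Cons.IH[of u] show ?case by auto
  qed auto
qed simp

lemma keys_prism:
  assumes "w \<in> Poly_Mapping.keys (prism F x)"
  obtains \<sigma> where "\<sigma> \<in> Poly_Mapping.keys x" "length w = Suc (length \<sigma>)" "set w \<subseteq> F ` set \<sigma> \<union> set \<sigma>"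
  using assms keys_frag_extend[of "prism_simplex F" x] keys_prism_simplex
  unfolding prism_def by blast

lemma is_chain_lookup_iff:
  "is_chain K i (Poly_Mapping.lookup x) \<longleftrightarrow> (\<forall>\<sigma>\<in>Poly_Mapping.keys x. length \<sigma> = Suc i \<and> set \<sigma> \<in> K)"
  unfolding is_chain_def by (auto simp: in_keys_iff)

lemma is_chain_lookup_Abs: "is_chain K i c \<Longrightarrow> Poly_Mapping.lookup (Abs_poly_mapping c) = c"
  unfolding is_chain_def by simp

lemma lookup_simplex_bd:
  "Poly_Mapping.lookup (simplex_bd \<sigma>) \<tau> = (\<Sum>j<length \<sigma>. if face j \<sigma> = \<tau> then (-1) ^ j else 0)"
  unfolding simplex_bd_def by (simp add: lookup_sum) (intro sum.cong, auto)

lemma bdry_lookup: "bdry (Poly_Mapping.lookup x) = Poly_Mapping.lookup (chain_bd x)"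
proof
  fix \<tau>
  have keys: "{\<sigma>. Poly_Mapping.lookup x \<sigma> \<noteq> 0} = Poly_Mapping.keys x" by (auto simp: in_keys_iff)
  show "bdry (Poly_Mapping.lookup x) \<tau> = Poly_Mapping.lookup (chain_bd x) \<tau>"
    unfolding bdry_def chain_bd_def frag_extend_def keys
    by (simp add: lookup_sum lookup_simplex_bd sum_distrib_left if_distrib mult.commute
        cong: if_cong)
qed

lemma is_cycle_lookup_iff:
  "is_cycle K i (Poly_Mapping.lookup x) \<longleftrightarrow>
     is_chain K i (Poly_Mapping.lookup x) \<and> (i = 0 \<or> chain_bd x = 0)"
  unfolding is_cycle_def bdry_lookup by (metis lookup_zero poly_mapping_eqI)

lemma is_boundary_lookup_iff:
  "is_boundary K i (Poly_Mapping.lookup y) \<longleftrightarrow>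
     (\<exists>z. is_chain K (Suc i) (Poly_Mapping.lookup z) \<and> chain_bd z = y)"
proof
  assume "is_boundary K i (Poly_Mapping.lookup y)"
  then obtain d where d: "is_chain K (Suc i) d" "bdry d = Poly_Mapping.lookup y"
    unfolding is_boundary_def by blast
  then have "chain_bd (Abs_poly_mapping d) = y"
    using bdry_lookup is_chain_lookup_Abs poly_mapping_eqI by metis
  then show "\<exists>z. is_chain K (Suc i) (Poly_Mapping.lookup z) \<and> chain_bd z = y"
    using d(1) is_chain_lookup_Abs by metis
qed (auto simp: is_boundary_def bdry_lookup)

lemma is_chain_image:
  assumes "simplicial_map K L F" "is_chain K i (Poly_Mapping.lookup x)"
  shows "is_chain L i (Poly_Mapping.lookup (chain_image F x))"
  using assms keys_chain_image[of F x]
  unfolding is_chain_lookup_iff simplicial_map_def by fastforce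

lemma is_cycle_image:
  assumes "simplicial_map K L F" "is_cycle K i (Poly_Mapping.lookup x)"
  shows "is_cycle L i (Poly_Mapping.lookup (chain_image F x))"
  using assms is_chain_image unfolding is_cycle_lookup_iff
  by (metis chain_bd_image chain_image_simps(1))

lemma is_boundary_image:
  assumes "simplicial_map K L F" "is_boundary K i (Poly_Mapping.lookup y)"
  shows "is_boundary L i (Poly_Mapping.lookup (chain_image F y))"
  using assms is_chain_image chain_bd_image unfolding is_boundary_lookup_iff by metis

lemma is_boundary_add:
  assumes "is_boundary K i (Poly_Mapping.lookup x)" "is_boundary K i (Poly_Mapping.lookup y)"
  shows "is_boundary K i (Poly_Mapping.lookup (x + y))"
proof -
  obtain z w where "is_chain K (Suc i) (Poly_Mapping.lookup z)" "chain_bd z = x"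
    and "is_chain K (Suc i) (Poly_Mapping.lookup w)" "chain_bd w = y"
    using assms unfolding is_boundary_lookup_iff by blast
  moreover have "Poly_Mapping.keys (z + w) \<subseteq> Poly_Mapping.keys z \<union> Poly_Mapping.keys w"
    by (rule keys_add)
  ultimately show ?thesis
    unfolding is_boundary_lookup_iff is_chain_lookup_iff by (intro exI[of _ "z + w"]) auto
qed

lemma is_boundary_diff_image:
  assumes K': "face_closed K'" and contig: "\<And>\<sigma>. \<sigma> \<in> K \<Longrightarrow> F ` \<sigma> \<union> \<sigma> \<in> K'"
    and x: "is_cycle K i (Poly_Mapping.lookup x)"
  shows "is_boundary K' i (Poly_Mapping.lookup (x - chain_image F x))"
proof -
  have x_keys: "length \<sigma> = Suc i" "set \<sigma> \<in> K" if "\<sigma> \<in> Poly_Mapping.keys x" for \<sigma>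
    using x that unfolding is_cycle_lookup_iff is_chain_lookup_iff by auto
  txt \<open>For i = 0 every chain counts as a cycle, but then its boundary consists of empty
    simplices, which the prism operator kills.\<close>
  have "prism F (chain_bd x) = 0"
    using x x_keys prism_chain_bd_vertices[of x F] unfolding is_cycle_lookup_iff by auto
  then have "chain_bd (prism F x) = x - chain_image F x"
    using chain_bd_prism[of F x] by simp
  moreover have "is_chain K' (Suc i) (Poly_Mapping.lookup (prism F x))"
    unfolding is_chain_lookup_iff
  proof
    fix w assume "w \<in> Poly_Mapping.keys (prism F x)"
    then obtain \<sigma> where \<sigma>: "\<sigma> \<in> Poly_Mapping.keys x" "length w = Suc (length \<sigma>)"
      and w: "set w \<subseteq> F ` set \<sigma> \<union> set \<sigma>"
      by (auto elim: keys_prism)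
    have "set w \<noteq> {}" using \<sigma>(2) by auto
    then have "set w \<in> K'"
      using K' contig[OF x_keys(2)[OF \<sigma>(1)]] w unfolding face_closed_def by blast
    then show "length w = Suc (Suc i) \<and> set w \<in> K'" using \<sigma> x_keys by simp
  qed
  ultimately show ?thesis unfolding is_boundary_lookup_iff by blast
qed

lemma is_boundary_through_retract:
  assumes f: "simplicial_map K L f" and r: "simplicial_map L' K' r"
    and L: "\<And>c. is_cycle L i c \<Longrightarrow> is_boundary L' i c"
    and K': "face_closed K'" and contig: "\<And>\<sigma>. \<sigma> \<in> K \<Longrightarrow> (r \<circ> f) ` \<sigma> \<union> \<sigma> \<in> K'"
    and c: "is_cycle K i c"
  shows "is_boundary K' i c"
proof -
  define x where "x = Abs_poly_mapping c"
  have c_eq: "c = Poly_Mapping.lookup x"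
    unfolding x_def using c is_chain_lookup_Abs unfolding is_cycle_def by metis
  have "is_boundary L' i (Poly_Mapping.lookup (chain_image f x))"
    using L is_cycle_image[OF f] c unfolding c_eq by blast
  then have "is_boundary K' i (Poly_Mapping.lookup (chain_image (r \<circ> f) x))"
    using is_boundary_image[OF r] chain_image_comp by metis
  moreover have "is_boundary K' i (Poly_Mapping.lookup (x - chain_image (r \<circ> f) x))"
    using is_boundary_diff_image[where F = "r \<circ> f", OF K' contig] c unfolding c_eq by blast
  ultimately show ?thesis
    using is_boundary_add unfolding c_eq by fastforce
qed

lemma ess_trivial_homology_quasi_retraction:
  assumes GP: "group_pair G Ps" and HQ: "group_pair H Qs"
    and S: "fin_gen_set G S" and T: "fin_gen_set H T"
    and q: "quasi_retraction_of_pairs G Ps S H Qs T L C M f1 f2 r1 r2"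
    and H_trivial: "ess_trivial_homology (Rhat H Qs T) i"
  shows "ess_trivial_homology (Rhat G Ps S) i"
  unfolding ess_trivial_homology_def
proof
  fix \<alpha>
  have f: "lipschitz_map_of_pairs G Ps S H Qs T L C M f1 f2"
    and r: "lipschitz_map_of_pairs H Qs T G Ps S L C M r1 r2"
    using q unfolding quasi_retraction_of_pairs_def by auto
  have LCM: "L \<ge> 1" "C \<ge> 0" "M \<ge> 0" using lipschitz_map_of_pairs_consts[OF f] by auto
  define \<alpha>' where "\<alpha>' = nat \<lceil>L * real \<alpha> + C + M\<rceil>"
  have \<alpha>': "real \<alpha>' \<ge> L * real \<alpha> + C + M" unfolding \<alpha>'_def by (rule real_nat_ceiling_ge)
  obtain \<beta>' where "\<beta>' \<ge> \<alpha>'"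
    and H_bound: "\<And>c. is_cycle (Rhat H Qs T \<alpha>') i c \<Longrightarrow> is_boundary (Rhat H Qs T \<beta>') i c"
    using H_trivial unfolding ess_trivial_homology_def by blast
  define \<beta> where "\<beta> = nat \<lceil>L * real \<beta>' + 2 * C + M\<rceil>"
  have \<beta>: "real \<beta> \<ge> L * real \<beta>' + 2 * C + M" unfolding \<beta>_def by (rule real_nat_ceiling_ge)
  have scale: "real \<alpha> + 2 * C \<le> real \<beta>"
    by (rule quasi_retraction_scale_le[OF LCM \<alpha>' \<open>\<beta>' \<ge> \<alpha>'\<close> \<beta>])
  have "real \<beta> \<ge> L * real \<beta>' + C + M" using \<beta> LCM by linarith
  then have r_map: "simplicial_map (Rhat H Qs T \<beta>') (Rhat G Ps S \<beta>) (vmap r1 r2)"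
    by (rule simplicial_map_vmap[OF HQ GP S r])
  have contig: "(vmap r1 r2 \<circ> vmap f1 f2) ` \<sigma> \<union> \<sigma> \<in> Rhat G Ps S \<beta>" if "\<sigma> \<in> Rhat G Ps S \<alpha>" for \<sigma>
    using unicone_quasi_retraction_union[OF GP S q scale] that unfolding Rhat_def by blast
  have "is_boundary (Rhat G Ps S \<beta>) i c" if "is_cycle (Rhat G Ps S \<alpha>) i c" for c
    by (rule is_boundary_through_retract[OF simplicial_map_vmap[OF GP HQ T f \<alpha>'] r_map H_bound
          face_closed_Rhat contig that])
  moreover have "\<alpha> \<le> \<beta>" using scale LCM by linarith
  ultimately show "\<exists>\<beta>\<ge>\<alpha>. \<forall>c. is_cycle (Rhat G Ps S \<alpha>) i c \<longrightarrow> is_boundary (Rhat G Ps S \<beta>) i c"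
    by blast
qed

theorem lemma4p2:
  fixes G :: "('g, 'b) monoid_scheme" and H :: "('h, 'c) monoid_scheme"
    and Ps :: "'g set list" and Qs :: "'h set list"
    and S :: "'g set" and T :: "'h set"
    and L C M :: real
    and f1 :: "'g \<Rightarrow> 'h" and f2 :: "nat \<times> 'g set \<Rightarrow> nat \<times> 'h set"
  assumes GP: "group_pair G Ps" and HQ: "group_pair H Qs"
    and S: "fin_gen_set G S" and T: "fin_gen_set H T"
    and f: "lipschitz_map_of_pairs G Ps S H Qs T L C M f1 f2"
  shows
    "(\<forall>\<alpha> \<alpha>' :: nat. real \<alpha>' \<ge> L * real \<alpha> + C + M \<longrightarrow>
        simplicial_map (Rhat G Ps S \<alpha>) (Rhat H Qs T \<alpha>') (vmap f1 f2))
   \<and> (\<forall>(r1 :: 'h \<Rightarrow> 'g) (r2 :: nat \<times> 'h set \<Rightarrow> nat \<times> 'g set).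
        lipschitz_map_of_pairs H Qs T G Ps S L C M r1 r2 \<longrightarrow>
        quasi_retraction_of_pairs G Ps S H Qs T L C M f1 f2 r1 r2 \<longrightarrow>
          (\<forall>\<alpha> \<alpha>' \<beta> \<beta>' :: nat.
             real \<alpha>' \<ge> L * real \<alpha> + C + M \<longrightarrow> \<beta>' \<ge> \<alpha>' \<longrightarrow>
             real \<beta> \<ge> L * real \<beta>' + 2 * C + M \<longrightarrow>
             simp_homotopic (Rhat G Ps S \<alpha>) (Rhat G Ps S \<beta>)
               (vmap r1 r2 \<circ> vmap f1 f2) id)
        \<and> (\<forall>i. ess_trivial_homology (Rhat H Qs T) i \<longrightarrow>
                ess_trivial_homology (Rhat G Ps S) i))"
proof (intro conjI allI impI)
  fix \<alpha> \<alpha>' :: nat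
  assume "real \<alpha>' \<ge> L * real \<alpha> + C + M"
  then show "simplicial_map (Rhat G Ps S \<alpha>) (Rhat H Qs T \<alpha>') (vmap f1 f2)"
    by (rule simplicial_map_vmap[OF GP HQ T f])
next
  fix r1 r2 \<alpha> \<alpha>' \<beta> \<beta>'
  assume q: "quasi_retraction_of_pairs G Ps S H Qs T L C M f1 f2 r1 r2"
    and scales: "real \<alpha>' \<ge> L * real \<alpha> + C + M" "\<beta>' \<ge> \<alpha>'" "real \<beta> \<ge> L * real \<beta>' + 2 * C + M"
  have "L \<ge> 1" "C \<ge> 0" "M \<ge> 0" using lipschitz_map_of_pairs_consts[OF f] by auto
  from quasi_retraction_scale_le[OF this scales] have "real \<alpha> + 2 * C \<le> real \<beta>" .
  then show "simp_homotopic (Rhat G Ps S \<alpha>) (Rhat G Ps S \<beta>) (vmap r1 r2 \<circ> vmap f1 f2) id"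
    by (rule simp_homotopic_quasi_retraction[OF GP S q])
next
  fix r1 r2 i
  assume "quasi_retraction_of_pairs G Ps S H Qs T L C M f1 f2 r1 r2"
    and "ess_trivial_homology (Rhat H Qs T) i"
  then show "ess_trivial_homology (Rhat G Ps S) i"
    by (rule ess_trivial_homology_quasi_retraction[OF GP HQ S T])
qed

end
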